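(* Let $U\subset\mathbb{R}^N$ be an open connected bounded set and let $u:\overline{U}\to\mathbb{R}^N$ be a continuous, locally Lipschitz, open map such that $\mathcal{L}^N(U)=\mathcal{L}^N(u(U))$ and (i) $u(\partial U)\subset\partial(u(U))$; (ii) $u$ is a.e. differentiable and $\nabla u\in O(N)$ a.e. on $U$. Then $u$ is an affine function.
   Context: $O(N)$ denotes the set of orthogonal $N\times N$ matrices. *)

theory Defs
  imports "HOL-Analysis.Analysis"
begin

definition locally_lipschitz_on :: "('a::metric_space) set \<Rightarrow> ('a \<Rightarrow> 'b::metric_space) \<Rightarrow> bool" where
  "locally_lipschitz_on S f \<longleftrightarrow>
     (\<forall>x\<in>S. \<exists>e>0. \<exists>L. L-lipschitz_on (ball x e \<inter> S) f)"

end

theory Submission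
  imports Defs "HOL-Library.Countable"
begin

(* On a small ball around any point of U, u is an isometry.  First, u does not increase
   distances: the map replacing one coordinate of z by that of u z has Jacobian determinant equal
   to a diagonal entry of an orthogonal matrix, hence does not increase volume, and it maps a thin
   box onto a set containing a box whose height is the increment of that coordinate of u; after
   rotating coordinates this bounds |u y - u x| by |y - x|.  Second, u does not decrease
   distances: u does not increase measure, so the hypothesis on the measure of u(U) makes u
   injective and measure preserving on open sets; if |u x - u y| < |x - y|, the images of the
   disjoint balls of radius |x - y|/2 around x and y, being of full measure in balls of the same
   radius around u x and u y, would meet.  An isometry of a ball is affine, with linear part its
   derivative at any point of differentiability, and connectedness makes the local affine maps
   agree. *)

section \<open>Locally Lipschitz maps\<close>

lemma locally_lipschitz_on_subset:
  "locally_lipschitz_on S f \<Longrightarrow> T \<subseteq> S \<Longrightarrow> locally_lipschitz_on T f"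
  unfolding locally_lipschitz_on_def by (meson Int_mono in_mono lipschitz_on_subset order_refl)

lemma locally_lipschitz_on_local_bound:
  fixes f :: "'a::real_normed_vector \<Rightarrow> 'b::real_normed_vector"
  assumes "locally_lipschitz_on S f" "x \<in> S"
  shows "\<exists>T B. open T \<and> x \<in> T \<and> (\<forall>y\<in>S \<inter> T. norm (f y - f x) \<le> B * norm (y - x))"
proof -
  obtain e L where "e > 0" and lip: "L-lipschitz_on (ball x e \<inter> S) f"
    using assms unfolding locally_lipschitz_on_def by blast
  then have "norm (f y - f x) \<le> L * norm (y - x)" if "y \<in> S \<inter> ball x e" for y
    using lipschitz_onD[OF lip, of y x] that assms(2) by (simp add: dist_norm)
  then show ?thesis
    using \<open>e > 0\<close> by (intro exI[of _ "ball x e"] exI[of _ L]) auto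
qed

lemma locally_lipschitz_on_imp_continuous_on:
  assumes "locally_lipschitz_on S f"
  shows "continuous_on S f"
proof (rule continuous_on_eq_continuous_within[THEN iffD2], intro ballI)
  fix x assume "x \<in> S"
  then obtain e L where "e > 0" and lip: "L-lipschitz_on (ball x e \<inter> S) f"
    using assms unfolding locally_lipschitz_on_def by blast
  have "continuous (at x within ball x e \<inter> S) f"
    using lipschitz_on_continuous_within[OF lip] \<open>x \<in> S\<close> \<open>e > 0\<close> by simp
  then show "continuous (at x within S) f"
    using \<open>e > 0\<close> at_within_nhd[of x "ball x e" "ball x e \<inter> S" S] by (simp add: Int_ac)
qed

lemma locally_lipschitz_on_compose_isometries:
  fixes h :: "'b::real_normed_vector \<Rightarrow> 'c::real_normed_vector"
    and k :: "'d::real_normed_vector \<Rightarrow> 'a::real_normed_vector"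
  assumes "locally_lipschitz_on S f" "linear h" "linear k"
    and "\<And>x. norm (h x) = norm x" "\<And>x. norm (k x) = norm x"
  shows "locally_lipschitz_on (k -` S) (h \<circ> f \<circ> k)"
  unfolding locally_lipschitz_on_def
proof
  have dist_h: "dist (h y) (h z) = dist y z" and dist_k: "dist (k y') (k z') = dist y' z'"
    for y z y' z'
    by (simp_all add: dist_norm linear_diff[symmetric] assms)
  fix x assume "x \<in> k -` S"
  then obtain e L where "e > 0" and lip: "L-lipschitz_on (ball (k x) e \<inter> S) f"
    using assms(1) unfolding locally_lipschitz_on_def by blast
  have "L-lipschitz_on (ball x e \<inter> k -` S) (h \<circ> f \<circ> k)"
  proof (rule lipschitz_onI)
    fix y z assume "y \<in> ball x e \<inter> k -` S" "z \<in> ball x e \<inter> k -` S"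
    then have "k y \<in> ball (k x) e \<inter> S" "k z \<in> ball (k x) e \<inter> S"
      by (simp_all add: dist_k)
    from lipschitz_onD[OF lip this]
    show "dist ((h \<circ> f \<circ> k) y) ((h \<circ> f \<circ> k) z) \<le> L * dist y z"
      by (simp add: dist_h dist_k)
  qed (rule lipschitz_on_nonneg[OF lip])
  then show "\<exists>e>0. \<exists>L. L-lipschitz_on (ball x e \<inter> k -` S) (h \<circ> f \<circ> k)"
    using \<open>e > 0\<close> by blast
qed

lemma locally_lipschitz_on_replace_coordinate:
  fixes g :: "real^'n::finite \<Rightarrow> real^'n"
  assumes "locally_lipschitz_on S g"
  shows "locally_lipschitz_on S (\<lambda>z. z + (g z $ k - z $ k) *\<^sub>R axis k 1)"
  unfolding locally_lipschitz_on_def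
proof
  fix x assume "x \<in> S"
  then obtain e L where "e > 0" and lip: "L-lipschitz_on (ball x e \<inter> S) g"
    using assms unfolding locally_lipschitz_on_def by blast
  have "(2 + L)-lipschitz_on (ball x e \<inter> S) (\<lambda>z. z + (g z $ k - z $ k) *\<^sub>R axis k 1)"
  proof (rule lipschitz_onI)
    fix y z assume yz: "y \<in> ball x e \<inter> S" "z \<in> ball x e \<inter> S"
    have "(y + (g y $ k - y $ k) *\<^sub>R axis k 1) - (z + (g z $ k - z $ k) *\<^sub>R axis k 1) =
        (y - z) + ((g y - g z) $ k - (y - z) $ k) *\<^sub>R axis k 1"
      by (simp add: algebra_simps)
    then have "dist (y + (g y $ k - y $ k) *\<^sub>R axis k 1) (z + (g z $ k - z $ k) *\<^sub>R axis k 1)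
        \<le> dist y z + \<bar>(g y - g z) $ k - (y - z) $ k\<bar>"
      unfolding dist_norm by (metis norm_triangle_ineq norm_axis_1 norm_scaleR mult.right_neutral)
    also have "\<dots> \<le> dist y z + (dist (g y) (g z) + dist y z)"
      using component_le_norm_cart[of "g y - g z" k] component_le_norm_cart[of "y - z" k]
      by (simp add: dist_norm)
    also have "\<dots> \<le> (2 + L) * dist y z"
      using lipschitz_onD[OF lip yz] by (simp add: algebra_simps)
    finally show "dist (y + (g y $ k - y $ k) *\<^sub>R axis k 1) (z + (g z $ k - z $ k) *\<^sub>R axis k 1)
        \<le> (2 + L) * dist y z" .
  qed (use lipschitz_on_nonneg[OF lip] in simp)
  then show "\<exists>e>0. \<exists>L. L-lipschitz_on (ball x e \<inter> S) (\<lambda>z. z + (g z $ k - z $ k) *\<^sub>R axis k 1)"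
    using \<open>e > 0\<close> by blast
qed

section \<open>Images of sets under maps with bounded Jacobian\<close>

lemma measure_image_det_bound_wellorder:
  fixes f :: "real^'n::{finite,wellorder} \<Rightarrow> real^'n::_"
  assumes S: "S \<in> lmeasurable" and N: "negligible N" and lip: "locally_lipschitz_on S f"
    and der: "\<And>x. x \<in> S - N \<Longrightarrow> (f has_derivative f' x) (at x)"
    and det: "\<And>x. x \<in> S - N \<Longrightarrow> \<bar>det (matrix (f' x))\<bar> \<le> B"
  shows "f ` S \<in> lmeasurable" and "measure lebesgue (f ` S) \<le> B * measure lebesgue S"
proof -
  have SN: "S - N \<in> lmeasurable"
    using S N by (simp add: fmeasurable_Diff negligible_imp_sets)
  have der_within: "\<And>x. x \<in> S - N \<Longrightarrow> (f has_derivative f' x) (at x within S - N)"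
    using der has_derivative_at_withinI by blast
  have "(\<lambda>x. \<bar>det (matrix (f' x))\<bar>) \<in> borel_measurable (lebesgue_on (S - N))"
    using borel_measurable_det_Jacobian[OF fmeasurableD[OF SN] der_within] by measurable
  then have "(\<lambda>x. \<bar>det (matrix (f' x))\<bar>) absolutely_integrable_on (S - N)"
    by (rule measurable_bounded_by_integrable_imp_absolutely_integrable[OF _ fmeasurableD[OF SN],
          where g="\<lambda>x. B"]) (use SN det in \<open>auto intro: integrable_on_const\<close>)
  then have int: "(\<lambda>x. \<bar>det (matrix (f' x))\<bar>) integrable_on (S - N)"
    using set_lebesgue_integral_eq_integral(1) by blast
  have image_SN: "f ` (S - N) \<in> lmeasurable"
    and measure_SN: "measure lebesgue (f ` (S - N)) \<le> B * measure lebesgue (S - N)"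
    using measurable_bounded_differentiable_image[OF SN der_within int det]
      measure_bounded_differentiable_image[OF SN der_within int det] by auto
  have "negligible (f ` (S \<inter> N))"
  proof (rule negligible_locally_Lipschitz_image)
    show "negligible (S \<inter> N)"
      using N negligible_subset by blast
    show "\<exists>T B. open T \<and> x \<in> T \<and> (\<forall>y\<in>S \<inter> N \<inter> T. norm (f y - f x) \<le> B * norm (y - x))"
      if "x \<in> S \<inter> N" for x
      using locally_lipschitz_on_local_bound[OF locally_lipschitz_on_subset[OF lip] that] by blast
  qed simp
  then have neg: "negligible (f ` (S - N) - f ` S \<union> (f ` S - f ` (S - N)))"
    by (rule negligible_subset) auto
  have "f ` S \<in> lmeasurable" "measure lebesgue (f ` S) = measure lebesgue (f ` (S - N))"
    by (rule lmeasurable_negligible_symdiff[OF image_SN neg],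
        rule measure_negligible_symdiff[OF image_SN neg])
  moreover have "measure lebesgue S = measure lebesgue (S - N)"
    by (rule measure_negligible_symdiff[OF SN], rule negligible_subset[OF N]) auto
  ultimately show "f ` S \<in> lmeasurable" "measure lebesgue (f ` S) \<le> B * measure lebesgue S"
    using measure_SN by simp_all
qed

definition vec_reindex :: "('m \<Rightarrow> 'n) \<Rightarrow> 'a^'n \<Rightarrow> 'a^'m" where
  "vec_reindex f x = (\<chi> i. x $ f i)"

lemma vec_reindex_nth [simp]: "vec_reindex f x $ i = x $ f i"
  by (simp add: vec_reindex_def)

lemma vec_reindex_inv:
  "bij f \<Longrightarrow> vec_reindex (inv f) (vec_reindex f x) = x"
  "bij f \<Longrightarrow> vec_reindex f (vec_reindex (inv f) y) = y"
  by (simp_all add: vec_eq_iff bij_is_inj bij_is_surj inv_f_f surj_f_inv_f)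

lemma linear_vec_reindex: "linear (vec_reindex f :: real^'n \<Rightarrow> real^'m)"
  by (rule linearI) (simp_all add: vec_eq_iff)

lemma norm_vec_reindex:
  fixes f :: "'m::finite \<Rightarrow> 'n::finite"
  assumes "bij f"
  shows "norm (vec_reindex f x :: real^'m) = norm x"
proof -
  have "(\<Sum>i\<in>UNIV. (x $ f i)\<^sup>2) = (\<Sum>j\<in>UNIV. (x $ j)\<^sup>2)"
    using sum.reindex_bij_betw[OF assms, of "\<lambda>j. (x $ j)\<^sup>2"] by simp
  then show ?thesis by (simp add: norm_vec_def L2_set_def)
qed

lemma continuous_on_vec_reindex: "continuous_on S (vec_reindex f :: real^'n \<Rightarrow> real^'m)"
  by (simp add: linear_continuous_on linear_vec_reindex linear_linear)

lemma prod_Basis_cart: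
  "(\<Prod>b\<in>(Basis :: (real^'n) set). g b) = (\<Prod>i\<in>UNIV. g (axis i 1))"
  by (simp add: Basis_vec_def UNION_singleton_eq_range prod.reindex axis_eq_axis inj_on_def)

lemma lborel_vec_reindex:
  fixes f :: "'m::finite \<Rightarrow> 'n::finite"
  assumes "bij f"
  shows "distr lborel borel (vec_reindex f) = (lborel :: (real^'m) measure)"
proof (rule lborel_eqI[symmetric])
  fix l u :: "real^'m"
  assume le: "\<And>b. b \<in> Basis \<Longrightarrow> l \<bullet> b \<le> u \<bullet> b"
  have vimage_box: "vec_reindex f -` box l u = box (vec_reindex (inv f) l) (vec_reindex (inv f) u)"
    using assms by (auto simp: mem_box_cart bij_inv_eq_iff) (metis bij_inv_eq_iff)+
  have "l $ i \<le> u $ i" for i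
    using le[of "axis i 1"] by (auto simp: cart_eq_inner_axis Basis_vec_def)
  then have "\<forall>b\<in>Basis. vec_reindex (inv f) l \<bullet> b \<le> vec_reindex (inv f) u \<bullet> b"
    by (auto simp: Basis_vec_def inner_axis cart_eq_inner_axis[symmetric])
  then have "emeasure lborel (box (vec_reindex (inv f) l) (vec_reindex (inv f) u)) =
      (\<Prod>j\<in>UNIV. u $ inv f j - l $ inv f j)"
    by (simp add: emeasure_lborel_box_eq prod_Basis_cart cart_eq_inner_axis[symmetric])
  then have "emeasure (distr lborel borel (vec_reindex f)) (box l u) =
      (\<Prod>j\<in>UNIV. u $ inv f j - l $ inv f j)"
    using borel_measurable_continuous_onI[OF continuous_on_vec_reindex[of UNIV f]]
    by (simp add: emeasure_distr vimage_box)
  also have "\<dots> = (\<Prod>i\<in>UNIV. u $ i - l $ i)"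
    using prod.reindex_bij_betw[OF bij_imp_bij_inv[OF assms], of "\<lambda>i. u $ i - l $ i"] by simp
  finally show "emeasure (distr lborel borel (vec_reindex f)) (box l u) = (\<Prod>b\<in>Basis. (u - l) \<bullet> b)"
    by (simp add: prod_Basis_cart cart_eq_inner_axis[symmetric])
qed simp

lemma lebesgue_vec_reindex:
  fixes f :: "'m::finite \<Rightarrow> 'n::finite"
  assumes "bij f"
  shows "(vec_reindex f :: real^'n \<Rightarrow> real^'m) \<in> lebesgue \<rightarrow>\<^sub>M lebesgue"
    and "distr lebesgue lebesgue (vec_reindex f) = (lebesgue :: (real^'m) measure)"
proof -
  have meas: "(vec_reindex f :: real^'n \<Rightarrow> real^'m) \<in> borel \<rightarrow>\<^sub>M borel"
    by (rule borel_measurable_continuous_onI[OF continuous_on_vec_reindex])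
  have meas_lebesgue: "(vec_reindex f :: real^'n \<Rightarrow> real^'m) \<in> borel_measurable lebesgue"
    using meas by (intro measurable_completion) simp
  have "distr lebesgue lborel (vec_reindex f) = distr lborel lborel (vec_reindex f :: real^'n \<Rightarrow> real^'m)"
    by (rule distr_completion) (simp add: meas)
  also have "\<dots> = distr lborel borel (vec_reindex f)"
    by (rule distr_cong) auto
  finally have distr_eq: "distr lebesgue lborel (vec_reindex f) = (lborel :: (real^'m) measure)"
    using lborel_vec_reindex[OF assms] by simp
  then have null_eq: "null_sets lborel = null_sets (distr lebesgue lborel (vec_reindex f) :: (real^'m) measure)"
    by simp
  show "(vec_reindex f :: real^'n \<Rightarrow> real^'m) \<in> lebesgue \<rightarrow>\<^sub>M lebesgue"
    using meas_lebesgue by (intro completion.measurable_completion2) (simp_all add: null_eq)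
  have "(lebesgue :: (real^'m) measure) = completion (distr lebesgue lborel (vec_reindex f))"
    by (simp add: distr_eq)
  also have "\<dots> = distr lebesgue lebesgue (vec_reindex f)"
    by (subst completion.completion_distr_eq) (auto simp: null_eq meas_lebesgue)
  finally show "distr lebesgue lebesgue (vec_reindex f) = (lebesgue :: (real^'m) measure)" ..
qed

lemma lmeasurable_vec_reindex_vimage:
  fixes f :: "'m::finite \<Rightarrow> 'n::finite" and A :: "(real^'m) set"
  assumes "bij f" "A \<in> lmeasurable"
  shows "vec_reindex f -` A \<in> lmeasurable"
    and "measure lebesgue (vec_reindex f -` A) = measure lebesgue A"
proof -
  have "emeasure lebesgue A = emeasure (distr lebesgue lebesgue (vec_reindex f)) A"
    by (simp add: lebesgue_vec_reindex(2)[OF assms(1)])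
  also have "\<dots> = emeasure lebesgue (vec_reindex f -` A)"
    using assms by (simp add: emeasure_distr lebesgue_vec_reindex(1) fmeasurableD)
  finally have "emeasure lebesgue (vec_reindex f -` A) = emeasure lebesgue A" ..
  moreover have "vec_reindex f -` A \<in> sets lebesgue"
    using measurable_sets[OF lebesgue_vec_reindex(1)[OF assms(1)] fmeasurableD[OF assms(2)]]
    by simp
  ultimately show "vec_reindex f -` A \<in> lmeasurable"
    and "measure lebesgue (vec_reindex f -` A) = measure lebesgue A"
    using assms(2) by (auto simp: fmeasurable_def measure_def)
qed

lemma det_reindex:
  fixes A :: "'a::comm_ring_1^'n::finite^'n" and f :: "'m::finite \<Rightarrow> 'n"
  assumes "bij f"
  shows "det (\<chi> i j. A $ f i $ f j) = det A"
proof -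
  let ?conj = "map_permutation (UNIV :: 'm set) f"
  have conj_eq: "?conj p = (\<lambda>x. if x \<in> UNIV then f (p (inv_into UNIV f x)) else x)" for p
    using assms by (auto simp: map_permutation_def restrict_id_def bij_is_surj fun_eq_iff)
  have bij_conj: "bij_betw ?conj {p. p permutes UNIV} {q. q permutes UNIV}"
    unfolding conj_eq[abs_def] using bij_betw_permutations[OF assms]
    by (simp add: assms bij_betw_def)
  have term_eq: "of_int (sign p) * (\<Prod>i\<in>UNIV. A $ f i $ f (p i)) =
      of_int (sign (?conj p)) * (\<Prod>j\<in>UNIV. A $ j $ ?conj p j)" if "p permutes UNIV" for p
  proof -
    have "(\<Prod>j\<in>UNIV. A $ j $ ?conj p j) = (\<Prod>i\<in>UNIV. A $ f i $ ?conj p (f i))"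
      using prod.reindex_bij_betw[OF assms, of "\<lambda>j. A $ j $ ?conj p j"]
      by (simp add: assms bij_betw_def)
    also have "\<dots> = (\<Prod>i\<in>UNIV. A $ f i $ f (p i))"
      using assms by (simp add: map_permutation_apply bij_is_inj)
    finally show ?thesis
      using sign_map_permutation[of f UNIV p] that assms by (simp add: bij_is_inj)
  qed
  have "det (\<chi> i j. A $ f i $ f j) = (\<Sum>p | p permutes UNIV. of_int (sign p) * (\<Prod>i\<in>UNIV. A $ f i $ f (p i)))"
    by (simp add: det_def)
  also have "\<dots> = (\<Sum>p | p permutes UNIV. of_int (sign (?conj p)) * (\<Prod>j\<in>UNIV. A $ j $ ?conj p j))"
    by (rule sum.cong) (simp_all add: term_eq)
  also have "\<dots> = det A"
    unfolding det_def by (rule sum.reindex_bij_betw[OF bij_conj])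
  finally show ?thesis .
qed

lemma det_matrix_vec_reindex_conj:
  fixes f :: "'m::finite \<Rightarrow> 'n::finite" and D :: "real^'n \<Rightarrow> real^'n"
  assumes "bij f"
  shows "det (matrix (vec_reindex f \<circ> D \<circ> vec_reindex (inv f))) = det (matrix D)"
proof -
  have reindex_axis: "vec_reindex (inv f) (axis j 1) = (axis (f j) 1 :: real^'n)" for j
    using assms by (auto simp: vec_eq_iff axis_def bij_inv_eq_iff bij_is_inj inv_f_f)
  have "matrix (vec_reindex f \<circ> D \<circ> vec_reindex (inv f)) = (\<chi> i j. matrix D $ f i $ f j)"
    by (simp add: vec_eq_iff matrix_def reindex_axis)
  then show ?thesis
    by (simp add: det_reindex[OF assms])
qed

lemma conj_image_vimage_eq:
  assumes "\<And>x. \<Phi> (\<Psi> x) = x" "\<And>y. \<Psi> (\<Phi> y) = y"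
  shows "(\<Psi> \<circ> f \<circ> \<Phi>) ` (\<Phi> -` S) = \<Phi> -` (f ` S)"
proof (intro equalityI subsetI)
  fix y assume "y \<in> \<Phi> -` (f ` S)"
  then obtain x where "x \<in> S" "\<Phi> y = f x"
    by auto
  then have "y = (\<Psi> \<circ> f \<circ> \<Phi>) (\<Psi> x)" "\<Psi> x \<in> \<Phi> -` S"
    using assms by (metis comp_apply, simp)
  then show "y \<in> (\<Psi> \<circ> f \<circ> \<Phi>) ` (\<Phi> -` S)"
    by blast
qed (auto simp: assms)

(* The change of variables theory needs a well-ordered index type; the bound is transferred to
   an arbitrary finite index type through this copy of it, ordered by to_nat. *)

typedef 'a ranked = "UNIV :: 'a set" ..

lemma bij_Rep_ranked: "bij Rep_ranked"
  by (metis Rep_ranked_inject Rep_ranked_cases UNIV_I bijI injI surjI)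

instance ranked :: (finite) finite
proof
  have "UNIV = range (Abs_ranked :: 'a \<Rightarrow> 'a ranked)"
    by (metis Abs_ranked_cases UNIV_I rangeI subsetI subset_antisym)
  then show "finite (UNIV :: 'a ranked set)"
    by (metis finite_imageI finite)
qed

instantiation ranked :: (finite) wellorder
begin

definition less_eq_ranked :: "'a ranked \<Rightarrow> 'a ranked \<Rightarrow> bool" where
  "x \<le> y \<longleftrightarrow> to_nat (Rep_ranked x) \<le> to_nat (Rep_ranked y)"

definition less_ranked :: "'a ranked \<Rightarrow> 'a ranked \<Rightarrow> bool" where
  "x < y \<longleftrightarrow> to_nat (Rep_ranked x) < to_nat (Rep_ranked y)"

instance
proof
  fix P :: "'a ranked \<Rightarrow> bool" and a :: "'a ranked"
  assume step: "\<And>x. (\<And>y. y < x \<Longrightarrow> P y) \<Longrightarrow> P x"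
  show "P a"
    by (induction "to_nat (Rep_ranked a)" arbitrary: a rule: less_induct)
       (metis step less_ranked_def)
qed (auto simp: less_eq_ranked_def less_ranked_def Rep_ranked_inject[symmetric])

end

lemma measure_image_det_bound:
  fixes f :: "real^'n::finite \<Rightarrow> real^'n"
  assumes S: "S \<in> lmeasurable" and N: "negligible N" and lip: "locally_lipschitz_on S f"
    and der: "\<And>x. x \<in> S - N \<Longrightarrow> (f has_derivative f' x) (at x)"
    and det: "\<And>x. x \<in> S - N \<Longrightarrow> \<bar>det (matrix (f' x))\<bar> \<le> B"
  shows "f ` S \<in> lmeasurable" and "measure lebesgue (f ` S) \<le> B * measure lebesgue S"
proof -
  define \<rho> :: "'n ranked \<Rightarrow> 'n" where "\<rho> = Rep_ranked"
  have \<rho>: "bij \<rho>" "bij (inv \<rho>)"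
    by (simp_all add: \<rho>_def bij_Rep_ranked bij_imp_bij_inv)
  define \<Psi> :: "real^'n \<Rightarrow> real^'n ranked" where "\<Psi> = vec_reindex \<rho>"
  define \<Phi> :: "real^'n ranked \<Rightarrow> real^'n" where "\<Phi> = vec_reindex (inv \<rho>)"
  have \<Phi>\<Psi>: "\<Phi> (\<Psi> x) = x" and \<Psi>\<Phi>: "\<Psi> (\<Phi> y) = y" for x y
    by (simp_all add: \<Phi>_def \<Psi>_def vec_reindex_inv \<rho>)
  have lin: "linear \<Phi>" "linear \<Psi>" and norm: "norm (\<Phi> y) = norm y" "norm (\<Psi> x) = norm x" for x y
    by (simp_all add: \<Phi>_def \<Psi>_def linear_vec_reindex norm_vec_reindex \<rho>)
  have vimage_\<Phi>: "\<Phi> -` A \<in> lmeasurable" "measure lebesgue (\<Phi> -` A) = measure lebesgue A"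
    if "A \<in> lmeasurable" for A
    using lmeasurable_vec_reindex_vimage[OF \<rho>(2) that] by (simp_all add: \<Phi>_def)
  define g where "g = \<Psi> \<circ> f \<circ> \<Phi>"
  have S': "\<Phi> -` S \<in> lmeasurable"
    by (rule vimage_\<Phi>(1)[OF S])
  have N': "negligible (\<Phi> -` N)"
    using vimage_\<Phi>[OF negligible_imp_measurable[OF N]] N
    by (simp add: negligible_iff_measure0 negligible_imp_measure0)
  have lip': "locally_lipschitz_on (\<Phi> -` S) g"
    unfolding g_def by (rule locally_lipschitz_on_compose_isometries[OF lip lin(2,1) norm(2,1)])
  have der': "(g has_derivative \<Psi> \<circ> f' (\<Phi> y) \<circ> \<Phi>) (at y)"
    and det': "\<bar>det (matrix (\<Psi> \<circ> f' (\<Phi> y) \<circ> \<Phi>))\<bar> \<le> B"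
    if "y \<in> \<Phi> -` S - \<Phi> -` N" for y
    using der[of "\<Phi> y"] det[of "\<Phi> y"] that lin unfolding g_def
    by (auto intro!: diff_chain_at linear_imp_has_derivative
        simp: \<Psi>_def \<Phi>_def det_matrix_vec_reindex_conj \<rho>(1))
  have "\<Phi> -` (f ` S) \<in> lmeasurable"
    and "measure lebesgue (\<Phi> -` (f ` S)) \<le> B * measure lebesgue (\<Phi> -` S)"
    using measure_image_det_bound_wellorder[OF S' N' lip' der' det']
    unfolding g_def conj_image_vimage_eq[OF \<Phi>\<Psi> \<Psi>\<Phi>] by auto
  moreover have "f ` S = \<Psi> -` (\<Phi> -` (f ` S))"
    by (auto simp: \<Phi>\<Psi>)
  ultimately show "f ` S \<in> lmeasurable" "measure lebesgue (f ` S) \<le> B * measure lebesgue S"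
    using lmeasurable_vec_reindex_vimage[OF \<rho>(1), of "\<Phi> -` (f ` S)"] vimage_\<Phi>(2)[OF S]
    by (simp_all add: \<Psi>_def)
qed

section \<open>Maps with contracting derivative are 1-Lipschitz on convex sets\<close>

definition ae_contracting_on :: "'a::euclidean_space set \<Rightarrow> ('a \<Rightarrow> 'b::real_normed_vector) \<Rightarrow> bool" where
  "ae_contracting_on W g \<longleftrightarrow> locally_lipschitz_on W g \<and>
     (\<exists>N. negligible N \<and>
        (\<forall>x\<in>W - N. \<exists>D. (g has_derivative D) (at x) \<and> (\<forall>v. norm (D v) \<le> norm v)))"

lemma ae_contracting_on_subset:
  "ae_contracting_on W g \<Longrightarrow> T \<subseteq> W \<Longrightarrow> ae_contracting_on T g"
  unfolding ae_contracting_on_def by (meson Diff_mono locally_lipschitz_on_subset order_refl subsetD)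

lemma ae_contracting_on_orthogonal_conj:
  fixes P :: "'b::euclidean_space \<Rightarrow> 'b" and Q :: "'a::euclidean_space \<Rightarrow> 'a"
  assumes "ae_contracting_on W g" "orthogonal_transformation P" "orthogonal_transformation Q"
  shows "ae_contracting_on (Q -` W) (P \<circ> g \<circ> Q)"
proof -
  obtain N where N: "negligible N"
    and der: "\<And>x. x \<in> W - N \<Longrightarrow> \<exists>D. (g has_derivative D) (at x) \<and> (\<forall>v. norm (D v) \<le> norm v)"
    using assms(1) unfolding ae_contracting_on_def by blast
  have lin: "linear P" "linear Q" "linear (inv Q)"
    using assms(2,3) orthogonal_transformation_inv[OF assms(3)] orthogonal_transformation_linear
    by blast+
  have norm: "norm (P v) = norm v" "norm (Q w) = norm w" for v w
    using assms(2,3) orthogonal_transformation_norm by blast+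
  have "locally_lipschitz_on (Q -` W) (P \<circ> g \<circ> Q)"
    using assms(1) lin norm unfolding ae_contracting_on_def
    by (intro locally_lipschitz_on_compose_isometries) auto
  moreover have "Q -` N = inv Q ` N"
    using orthogonal_transformation_bij[OF assms(3)] by (simp add: bij_vimage_eq_inv_image)
  then have "negligible (Q -` N)"
    using N lin(3) by (simp add: negligible_differentiable_image_negligible linear_imp_differentiable_on)
  moreover have "\<exists>D. ((P \<circ> g \<circ> Q) has_derivative D) (at z) \<and> (\<forall>v. norm (D v) \<le> norm v)"
    if "z \<in> Q -` W - Q -` N" for z
  proof -
    have "Q z \<in> W - N"
      using that by simp
    then obtain D where D: "(g has_derivative D) (at (Q z))" "\<And>v. norm (D v) \<le> norm v"
      using der by blast
    have "((P \<circ> g \<circ> Q) has_derivative P \<circ> D \<circ> Q) (at z)"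
      by (intro diff_chain_at D(1) linear_imp_has_derivative lin)
    moreover have "norm ((P \<circ> D \<circ> Q) v) \<le> norm v" for v
      using D(2)[of "Q v"] by (simp add: norm)
    ultimately show ?thesis
      by blast
  qed
  ultimately show ?thesis
    unfolding ae_contracting_on_def by blast
qed

lemma det_row_replace_mat1:
  fixes r :: "real^'n::finite"
  shows "det ((\<chi> i j. if i = k then r $ j else if i = j then 1 else 0) :: real^'n^'n) = r $ k"
proof -
  define A :: "real^'n^'n" where "A = (\<chi> i j. if i = j then (if i = k then r $ k else 1) else 0)"
  define x where "x = (\<Sum>j\<in>UNIV - {k}. r $ j *s axis j (1::real))"
  have row_A: "row j A = axis j 1" if "j \<noteq> k" for j
    using that by (auto simp: row_def A_def axis_def vec_eq_iff)
  have "x \<in> vec.span {row j A |j. j \<noteq> k}"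
    unfolding x_def
  proof (rule vec.span_sum)
    fix j assume "j \<in> UNIV - {k}"
    then have "axis j 1 \<in> {row j A |j. j \<noteq> k}"
      using row_A by force
    then show "r $ j *s axis j 1 \<in> vec.span {row j A |j. j \<noteq> k}"
      by (simp add: vec.span_base vec.span_scale)
  qed
  moreover have "x $ m = (if m = k then 0 else r $ m)" for m
    unfolding x_def
    by (cases "m = k") (simp_all add: sum_component axis_def mult.commute[of "r $ _"]
        if_distrib[where f="\<lambda>t. t * _"] cong: if_cong)
  then have "(\<chi> i j. if i = k then r $ j else if i = j then 1 else 0) =
      (\<chi> i. if i = k then row k A + x else row i A)"
    by (auto simp: vec_eq_iff row_def A_def axis_def)
  ultimately have "det ((\<chi> i j. if i = k then r $ j else if i = j then 1 else 0) :: real^'n^'n) = det A"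
    using det_row_span by simp
  also have "\<dots> = r $ k"
    by (subst det_diagonal) (simp_all add: A_def prod.delta)
  finally show ?thesis .
qed

lemma det_matrix_replace_coordinate:
  fixes D :: "real^'n::finite \<Rightarrow> real^'n"
  assumes "linear D"
  shows "det (matrix (\<lambda>v. v + (D v $ k - v $ k) *\<^sub>R axis k 1)) = D (axis k 1) $ k"
proof -
  have "matrix (\<lambda>v. v + (D v $ k - v $ k) *\<^sub>R axis k 1) =
      (\<chi> i j. if i = k then row k (matrix D) $ j else if i = j then 1 else 0)"
    by (auto simp: vec_eq_iff matrix_def row_def axis_def)
  then show ?thesis
    by (simp add: det_row_replace_mat1 row_def matrix_def)
qed

lemma measure_cbox_cart_split:
  fixes a b :: "real^'n::finite"
  assumes "\<And>i. a $ i \<le> b $ i"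
  shows "measure lebesgue (cbox a b) = (b $ k - a $ k) * (\<Prod>i\<in>UNIV - {k}. b $ i - a $ i)"
proof -
  have "cbox a b \<noteq> {}"
    using assms by (auto simp: interval_ne_empty_cart)
  then have "measure lebesgue (cbox a b) = (\<Prod>i\<in>UNIV. b $ i - a $ i)"
    by (simp add: measure_completion content_cbox_cart)
  then show ?thesis
    by (simp add: prod.remove)
qed

lemma cbox_height_le_if_measure_le:
  fixes a b :: "real^'n::finite"
  assumes height: "a $ k \<le> b $ k" and width: "\<And>i. i \<noteq> k \<Longrightarrow> a $ i < b $ i" and "\<alpha> \<le> \<beta>"
    and le: "measure lebesgue (cbox (\<chi> i. if i = k then \<alpha> else a $ i) (\<chi> i. if i = k then \<beta> else b $ i))
      \<le> measure lebesgue (cbox a b)"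
  shows "\<beta> - \<alpha> \<le> b $ k - a $ k"
proof -
  define a' :: "real^'n" where "a' = (\<chi> i. if i = k then \<alpha> else a $ i)"
  define b' :: "real^'n" where "b' = (\<chi> i. if i = k then \<beta> else b $ i)"
  have ab: "a $ i \<le> b $ i" and ab': "a' $ i \<le> b' $ i" for i
    using height width[of i] \<open>\<alpha> \<le> \<beta>\<close> by (cases "i = k"; simp add: a'_def b'_def)+
  have "(\<Prod>i\<in>UNIV - {k}. b' $ i - a' $ i) = (\<Prod>i\<in>UNIV - {k}. b $ i - a $ i)"
    by (rule prod.cong) (auto simp: a'_def b'_def)
  then have "(\<beta> - \<alpha>) * (\<Prod>i\<in>UNIV - {k}. b $ i - a $ i) \<le>
      (b $ k - a $ k) * (\<Prod>i\<in>UNIV - {k}. b $ i - a $ i)"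
    using le unfolding a'_def[symmetric] b'_def[symmetric]
    unfolding measure_cbox_cart_split[OF ab, of k] measure_cbox_cart_split[OF ab', of k]
    by (simp add: a'_def b'_def)
  moreover have "(\<Prod>i\<in>UNIV - {k}. b $ i - a $ i) > 0"
    using width by (intro prod_pos) auto
  ultimately show ?thesis
    by (simp add: mult_le_cancel_right)
qed

lemma cbox_subset_image_replace_coordinate:
  fixes h :: "real^'n::finite \<Rightarrow> real"
  assumes "a $ k \<le> b $ k" "continuous_on (cbox a b) h"
    and bottom: "\<And>w. w \<in> cbox a b \<Longrightarrow> w $ k = a $ k \<Longrightarrow> h w \<le> \<alpha>"
    and top: "\<And>w. w \<in> cbox a b \<Longrightarrow> w $ k = b $ k \<Longrightarrow> \<beta> \<le> h w"
  shows "cbox (\<chi> i. if i = k then \<alpha> else a $ i) (\<chi> i. if i = k then \<beta> else b $ i)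
    \<subseteq> (\<lambda>z. z + (h z - z $ k) *\<^sub>R axis k 1) ` cbox a b"
proof
  fix p assume "p \<in> cbox (\<chi> i. if i = k then \<alpha> else a $ i) (\<chi> i. if i = k then \<beta> else b $ i)"
  then have p: "\<alpha> \<le> p $ k" "p $ k \<le> \<beta>" "\<And>i. i \<noteq> k \<Longrightarrow> a $ i \<le> p $ i \<and> p $ i \<le> b $ i"
    by (auto simp: mem_box_cart split: if_splits dest: spec)
  define \<phi> where "\<phi> s = (\<chi> i. if i = k then a $ k else p $ i) + s *\<^sub>R axis k 1" for s
  have \<phi>_box: "\<phi> s \<in> cbox a b" if "0 \<le> s" "s \<le> b $ k - a $ k" for s
    using that p(3) by (auto simp: mem_box_cart \<phi>_def axis_def)
  have "continuous_on {0..b $ k - a $ k} (h \<circ> \<phi>)"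
  proof (rule continuous_on_compose)
    show "continuous_on {0..b $ k - a $ k} \<phi>"
      unfolding \<phi>_def by (intro continuous_intros)
    show "continuous_on (\<phi> ` {0..b $ k - a $ k}) h"
      by (rule continuous_on_subset[OF assms(2)]) (use \<phi>_box in auto)
  qed
  moreover have "(h \<circ> \<phi>) 0 \<le> p $ k" "p $ k \<le> (h \<circ> \<phi>) (b $ k - a $ k)"
    using bottom[OF \<phi>_box, of 0] top[OF \<phi>_box, of "b $ k - a $ k"] p(1,2) assms(1)
    by (simp_all add: \<phi>_def axis_def)
  ultimately obtain s where s: "0 \<le> s" "s \<le> b $ k - a $ k" "h (\<phi> s) = p $ k"
    using IVT'[of "h \<circ> \<phi>" 0 "p $ k" "b $ k - a $ k"] assms(1) by auto
  have "p = \<phi> s + (h (\<phi> s) - \<phi> s $ k) *\<^sub>R axis k 1"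
    using s(3) by (auto simp: vec_eq_iff \<phi>_def axis_def)
  then show "p \<in> (\<lambda>z. z + (h z - z $ k) *\<^sub>R axis k 1) ` cbox a b"
    using \<phi>_box[OF s(1,2)] by blast
qed

lemma replace_coordinate_derivative:
  fixes g :: "real^'n::finite \<Rightarrow> real^'n"
  assumes D: "(g has_derivative D) (at x)" and contracting: "\<And>v. norm (D v) \<le> norm v"
  shows "((\<lambda>z. z + (g z $ k - z $ k) *\<^sub>R axis k 1) has_derivative
      (\<lambda>v. v + (D v $ k - v $ k) *\<^sub>R axis k 1)) (at x)"
    and "\<bar>det (matrix (\<lambda>v. v + (D v $ k - v $ k) *\<^sub>R axis k 1))\<bar> \<le> 1"
proof -
  have "((\<lambda>z. g z $ k) has_derivative (\<lambda>v. D v $ k)) (at x)"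
    using bounded_linear.has_derivative[OF bounded_linear_vec_nth D] .
  moreover have "((\<lambda>z. z $ k) has_derivative (\<lambda>v. v $ k)) (at x)"
    by (rule bounded_linear_imp_has_derivative[OF bounded_linear_vec_nth])
  ultimately show "((\<lambda>z. z + (g z $ k - z $ k) *\<^sub>R axis k 1) has_derivative
      (\<lambda>v. v + (D v $ k - v $ k) *\<^sub>R axis k 1)) (at x)"
    by (intro derivative_intros)
  have "\<bar>D (axis k 1) $ k\<bar> \<le> 1"
    using component_le_norm_cart[of "D (axis k 1)" k] contracting[of "axis k 1"] by simp
  then show "\<bar>det (matrix (\<lambda>v. v + (D v $ k - v $ k) *\<^sub>R axis k 1))\<bar> \<le> 1"
    using det_matrix_replace_coordinate[OF has_derivative_linear[OF D]] by simp
qed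

lemma face_gap_le_height:
  fixes g :: "real^'n::finite \<Rightarrow> real^'n"
  assumes height: "a $ k \<le> b $ k" and width: "\<And>i. i \<noteq> k \<Longrightarrow> a $ i < b $ i"
    and contracting: "ae_contracting_on (cbox a b) g"
    and bottom: "\<And>w. w \<in> cbox a b \<Longrightarrow> w $ k = a $ k \<Longrightarrow> g w $ k \<le> \<alpha>"
    and top: "\<And>w. w \<in> cbox a b \<Longrightarrow> w $ k = b $ k \<Longrightarrow> \<beta> \<le> g w $ k"
  shows "\<beta> - \<alpha> \<le> b $ k - a $ k"
proof (cases "\<alpha> \<le> \<beta>")
  case False
  then show ?thesis using height by simp
next
  case True
  obtain N where N: "negligible N"
    and der: "\<And>x. x \<in> cbox a b - N \<Longrightarrow> \<exists>D. (g has_derivative D) (at x) \<and> (\<forall>v. norm (D v) \<le> norm v)"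
    and lip: "locally_lipschitz_on (cbox a b) g"
    using contracting unfolding ae_contracting_on_def by blast
  define F where "F z = z + (g z $ k - z $ k) *\<^sub>R axis k 1" for z
  define D where "D x = (SOME D. (g has_derivative D) (at x) \<and> (\<forall>v. norm (D v) \<le> norm v))" for x
  have D: "(g has_derivative D x) (at x)" "\<And>v. norm (D x v) \<le> norm v" if "x \<in> cbox a b - N" for x
    using someI_ex[OF der[OF that]] unfolding D_def by blast+
  \<comment> \<open>F changes only the k-th coordinate, into that of g; its Jacobian determinant is the
    diagonal entry of Dg, so F does not increase volume, while the intermediate value theorem
    on each segment parallel to the k-th axis shows that F covers a box of height \<beta> - \<alpha>.\<close>
  have "continuous_on (cbox a b) (\<lambda>z. g z $ k)"
    using locally_lipschitz_on_imp_continuous_on[OF lip] by (intro continuous_intros)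
  from cbox_subset_image_replace_coordinate[OF height this bottom top]
  have sub: "cbox (\<chi> i. if i = k then \<alpha> else a $ i) (\<chi> i. if i = k then \<beta> else b $ i) \<subseteq> F ` cbox a b"
    unfolding F_def .
  have lip_F: "locally_lipschitz_on (cbox a b) F"
    unfolding F_def by (rule locally_lipschitz_on_replace_coordinate[OF lip])
  have der_F: "(F has_derivative (\<lambda>v. v + (D x v $ k - v $ k) *\<^sub>R axis k 1)) (at x)"
    and det_F: "\<bar>det (matrix (\<lambda>v. v + (D x v $ k - v $ k) *\<^sub>R axis k 1))\<bar> \<le> 1"
    if "x \<in> cbox a b - N" for x
    unfolding F_def using replace_coordinate_derivative[OF D[OF that]] by blast+
  note image_F = measure_image_det_bound[OF lmeasurable_cbox N lip_F der_F det_F]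
  have "measure lebesgue (cbox (\<chi> i. if i = k then \<alpha> else a $ i) (\<chi> i. if i = k then \<beta> else b $ i))
      \<le> measure lebesgue (F ` cbox a b)"
    by (rule measure_mono_fmeasurable[OF sub _ image_F(1)]) simp
  then have "measure lebesgue (cbox (\<chi> i. if i = k then \<alpha> else a $ i) (\<chi> i. if i = k then \<beta> else b $ i))
      \<le> measure lebesgue (cbox a b)"
    using image_F(2) by linarith
  from cbox_height_le_if_measure_le[OF height width \<open>\<alpha> \<le> \<beta>\<close> this]
  show ?thesis .
qed

definition thin_box :: "real^'n::finite \<Rightarrow> 'n \<Rightarrow> real \<Rightarrow> real \<Rightarrow> (real^'n) set" where
  "thin_box x k d \<delta> =
     cbox (\<chi> i. if i = k then x $ k else x $ i - \<delta>) (\<chi> i. if i = k then x $ k + d else x $ i + \<delta>)"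

lemma thin_box_near_axis_segment:
  fixes x z :: "real^'n::finite"
  assumes z: "z \<in> thin_box x k d \<delta>" and "0 < d" "0 \<le> \<delta>"
  shows "dist z (x + (z $ k - x $ k) *\<^sub>R axis k 1) \<le> real CARD('n) * \<delta>"
    and "x + (z $ k - x $ k) *\<^sub>R axis k 1 \<in> closed_segment x (x + d *\<^sub>R axis k 1)"
proof -
  have zi: "\<bar>z $ i - x $ i\<bar> \<le> \<delta>" if "i \<noteq> k" for i
    using z that by (force simp: thin_box_def mem_box_cart abs_le_iff dest: spec[of _ i])
  have zk: "x $ k \<le> z $ k" "z $ k \<le> x $ k + d"
    using z by (force simp: thin_box_def mem_box_cart dest: spec[of _ k])+
  have "dist z (x + (z $ k - x $ k) *\<^sub>R axis k 1) \<le>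
      (\<Sum>i\<in>UNIV. \<bar>(z - (x + (z $ k - x $ k) *\<^sub>R axis k 1)) $ i\<bar>)"
    unfolding dist_norm by (rule norm_le_l1_cart)
  also have "\<dots> \<le> (\<Sum>i\<in>(UNIV :: 'n set). \<delta>)"
    using zi \<open>0 \<le> \<delta>\<close> by (intro sum_mono) (simp add: axis_def)
  finally show "dist z (x + (z $ k - x $ k) *\<^sub>R axis k 1) \<le> real CARD('n) * \<delta>"
    by simp
  let ?t = "(z $ k - x $ k) / d"
  have "(1 - ?t) *\<^sub>R x + ?t *\<^sub>R (x + d *\<^sub>R axis k 1) = x + (?t * d) *\<^sub>R axis k 1"
    by (simp add: algebra_simps)
  then have "x + (z $ k - x $ k) *\<^sub>R axis k 1 = (1 - ?t) *\<^sub>R x + ?t *\<^sub>R (x + d *\<^sub>R axis k 1)"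
    using \<open>0 < d\<close> by simp
  moreover have "0 \<le> ?t" "?t \<le> 1"
    using zk \<open>0 < d\<close> by auto
  ultimately show "x + (z $ k - x $ k) *\<^sub>R axis k 1 \<in> closed_segment x (x + d *\<^sub>R axis k 1)"
    unfolding closed_segment_def by blast
qed

lemma thin_box_subset_open:
  fixes x :: "real^'n::finite"
  assumes "open W" "closed_segment x (x + d *\<^sub>R axis k 1) \<subseteq> W" "0 < d" "0 < r"
  obtains \<delta> where "\<delta> > 0" "thin_box x k d \<delta> \<subseteq> W"
    "\<And>z. z \<in> thin_box x k d \<delta> \<Longrightarrow> dist z (x + (z $ k - x $ k) *\<^sub>R axis k 1) < r"
proof -
  obtain e where "e > 0" and e: "(\<Union>p\<in>closed_segment x (x + d *\<^sub>R axis k 1). ball p e) \<subseteq> W"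
    using compact_subset_open_imp_ball_epsilon_subset[OF compact_segment assms(1,2)] by blast
  define \<delta> where "\<delta> = min e r / (2 * real CARD('n))"
  have "min e r > 0"
    using \<open>e > 0\<close> \<open>0 < r\<close> by simp
  then have "\<delta> > 0"
    by (simp add: \<delta>_def)
  have "real CARD('n) * \<delta> = min e r / 2"
    by (simp add: \<delta>_def)
  then have "real CARD('n) * \<delta> < min e r"
    using \<open>min e r > 0\<close> by linarith
  then have near: "dist z (x + (z $ k - x $ k) *\<^sub>R axis k 1) < min e r" if "z \<in> thin_box x k d \<delta>" for z
    using thin_box_near_axis_segment(1)[OF that \<open>0 < d\<close>] \<open>\<delta> > 0\<close>
      \<open>real CARD('n) * \<delta> < min e r\<close> by linarith
  have "thin_box x k d \<delta> \<subseteq> W"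
  proof
    fix z assume z: "z \<in> thin_box x k d \<delta>"
    then have "z \<in> ball (x + (z $ k - x $ k) *\<^sub>R axis k 1) e"
      using near by (simp add: dist_commute)
    with thin_box_near_axis_segment(2)[OF z \<open>0 < d\<close> less_imp_le[OF \<open>\<delta> > 0\<close>]] show "z \<in> W"
      by (intro subsetD[OF e UN_I])
  qed
  then show ?thesis
    using that \<open>\<delta> > 0\<close> near by force
qed

lemma coordinate_increment_le:
  fixes g :: "real^'n::finite \<Rightarrow> real^'n"
  assumes W: "open W" "convex W" and contracting: "ae_contracting_on W g"
    and x: "x \<in> W" and y: "x + d *\<^sub>R axis k 1 \<in> W" and d: "0 < d"
  shows "g (x + d *\<^sub>R axis k 1) $ k - g x $ k \<le> d"
proof (rule field_le_epsilon)
  fix \<epsilon> :: real assume "0 < \<epsilon>"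
  define y where "y = x + d *\<^sub>R axis k 1"
  have cont: "continuous_on W g"
    using contracting locally_lipschitz_on_imp_continuous_on unfolding ae_contracting_on_def by blast
  obtain d1 where "d1 > 0" and d1: "\<And>z. z \<in> W \<Longrightarrow> dist z x < d1 \<Longrightarrow> dist (g z) (g x) < \<epsilon> / 2"
    using cont x \<open>0 < \<epsilon>\<close> unfolding continuous_on_iff by (metis half_gt_zero)
  obtain d2 where "d2 > 0" and d2: "\<And>z. z \<in> W \<Longrightarrow> dist z y < d2 \<Longrightarrow> dist (g z) (g y) < \<epsilon> / 2"
    using cont y \<open>0 < \<epsilon>\<close> unfolding continuous_on_iff y_def by (metis half_gt_zero)
  have "closed_segment x (x + d *\<^sub>R axis k 1) \<subseteq> W"
    using W(2) x y by (simp add: closed_segment_subset)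
  moreover have "0 < min d1 d2"
    using \<open>d1 > 0\<close> \<open>d2 > 0\<close> by simp
  ultimately obtain \<delta> where "\<delta> > 0" and box_W: "thin_box x k d \<delta> \<subseteq> W"
    and near: "\<And>z. z \<in> thin_box x k d \<delta> \<Longrightarrow> dist z (x + (z $ k - x $ k) *\<^sub>R axis k 1) < min d1 d2"
    using thin_box_subset_open[OF W(1) _ d] by blast
  define a :: "real^'n" where "a = (\<chi> i. if i = k then x $ k else x $ i - \<delta>)"
  define b :: "real^'n" where "b = (\<chi> i. if i = k then x $ k + d else x $ i + \<delta>)"
  have box: "thin_box x k d \<delta> = cbox a b"
    by (simp add: thin_box_def a_def b_def)
  have "(g y $ k - \<epsilon> / 2) - (g x $ k + \<epsilon> / 2) \<le> b $ k - a $ k"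
  proof (rule face_gap_le_height)
    show "ae_contracting_on (cbox a b) g"
      using ae_contracting_on_subset[OF contracting box_W] by (simp add: box)
    fix w assume "w \<in> cbox a b"
    then have w: "w \<in> thin_box x k d \<delta>"
      by (simp add: box)
    show "g w $ k \<le> g x $ k + \<epsilon> / 2" if "w $ k = a $ k"
    proof -
      have "dist w x < d1"
        using near[OF w] that by (simp add: a_def)
      then have "\<bar>(g w - g x) $ k\<bar> < \<epsilon> / 2"
        using d1[of w] box_W w component_le_norm_cart[of "g w - g x" k] by (auto simp: dist_norm)
      then show ?thesis by (smt (verit) vector_minus_component)
    qed
    show "g y $ k - \<epsilon> / 2 \<le> g w $ k" if "w $ k = b $ k"
    proof -
      have "dist w y < d2"
        using near[OF w] that by (simp add: b_def y_def)
      then have "\<bar>(g w - g y) $ k\<bar> < \<epsilon> / 2"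
        using d2[of w] box_W w component_le_norm_cart[of "g w - g y" k] by (auto simp: dist_norm)
      then show ?thesis by (smt (verit) vector_minus_component)
    qed
  qed (use d \<open>\<delta> > 0\<close> in \<open>simp_all add: a_def b_def\<close>)
  then show "g (x + d *\<^sub>R axis k 1) $ k - g x $ k \<le> d + \<epsilon>"
    by (simp add: a_def b_def y_def)
qed

lemma directional_increment_le:
  fixes g :: "real^'n::finite \<Rightarrow> real^'n"
  assumes W: "open W" "convex W" and contracting: "ae_contracting_on W g"
    and x: "x \<in> W" and y: "x + d *\<^sub>R e \<in> W" and d: "0 < d"
    and e: "norm e = 1" and e': "norm e' = 1"
  shows "(g (x + d *\<^sub>R e) - g x) \<bullet> e' \<le> d"
proof -
  obtain k :: 'n where True by blast
  obtain Q :: "real^'n \<Rightarrow> real^'n" where Q: "orthogonal_transformation Q" "Q (axis k 1) = e"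
    using orthogonal_transformation_exists[of "axis k 1" e] e by auto
  obtain P :: "real^'n \<Rightarrow> real^'n" where P: "orthogonal_transformation P" "P e' = axis k 1"
    using orthogonal_transformation_exists[of e' "axis k 1"] e' by auto
  have linQ: "linear Q"
    using Q(1) orthogonal_transformation_linear by blast
  have QinvQ: "Q (inv Q z) = z" for z
    using orthogonal_transformation_bij[OF Q(1)] by (simp add: bij_is_surj surj_f_inv_f)
  have shift: "Q (inv Q x + d *\<^sub>R axis k 1) = x + d *\<^sub>R e"
    using linQ Q(2) by (simp add: linear_add linear_scale QinvQ)
  have "(P \<circ> g \<circ> Q) (inv Q x + d *\<^sub>R axis k 1) $ k - (P \<circ> g \<circ> Q) (inv Q x) $ k \<le> d"
  proof (rule coordinate_increment_le[OF _ _ ae_contracting_on_orthogonal_conj[OF contracting P(1) Q(1)]])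
    show "open (Q -` W)"
      using W(1) by (rule open_vimage[OF _ linear_continuous_on]) (simp add: linQ linear_linear)
    show "convex (Q -` W)"
      by (rule convex_linear_vimage[OF linQ W(2)])
    show "inv Q x \<in> Q -` W" "inv Q x + d *\<^sub>R axis k 1 \<in> Q -` W"
      using x y shift QinvQ[of x] by auto
  qed (rule d)
  moreover have "P v $ k = v \<bullet> e'" for v
    using P unfolding orthogonal_transformation_def by (metis cart_eq_inner_axis)
  ultimately show ?thesis
    using P(1) by (simp add: shift QinvQ orthogonal_transformation_linear linear_diff[symmetric]
        inner_diff_left)
qed

lemma lipschitz_one_if_ae_contracting:
  fixes g :: "real^'n::finite \<Rightarrow> real^'n"
  assumes W: "open W" "convex W" and contracting: "ae_contracting_on W g"
  shows "1-lipschitz_on W g"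
proof (rule lipschitz_onI)
  fix x y assume x: "x \<in> W" and y: "y \<in> W"
  show "dist (g x) (g y) \<le> 1 * dist x y"
  proof (cases "x = y \<or> g x = g y")
    case False
    define d where "d = norm (y - x)"
    define c where "c = norm (g y - g x)"
    have "d > 0" "c > 0"
      using False by (auto simp: d_def c_def)
    have "y = x + d *\<^sub>R ((1 / d) *\<^sub>R (y - x))"
      using \<open>d > 0\<close> by simp
    then have "(g y - g x) \<bullet> ((1 / c) *\<^sub>R (g y - g x)) \<le> d"
      using directional_increment_le[OF W contracting x, of d "(1 / d) *\<^sub>R (y - x)"
          "(1 / c) *\<^sub>R (g y - g x)"] y \<open>d > 0\<close> \<open>c > 0\<close> by (simp add: d_def c_def)
    then show ?thesis
      using \<open>c > 0\<close> by (simp add: c_def d_def dist_norm norm_minus_commute power2_norm_eq_inner[symmetric]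
          power2_eq_square)
  qed auto
qed simp

section \<open>Isometries and affine maps\<close>

lemma isometry_on_convex_segment:
  fixes u :: "'a::euclidean_space \<Rightarrow> 'b::euclidean_space"
  assumes "convex S" and x0: "x0 \<in> S" and x: "x \<in> S"
    and isometry: "\<And>x y. x \<in> S \<Longrightarrow> y \<in> S \<Longrightarrow> dist (u x) (u y) = dist x y"
    and t: "0 \<le> t" "t \<le> 1"
  shows "u (x0 + t *\<^sub>R (x - x0)) = u x0 + t *\<^sub>R (u x - u x0)"
proof -
  define w where "w = x - x0"
  define z where "z = x0 + t *\<^sub>R w"
  have "(1 - t) *\<^sub>R x0 + t *\<^sub>R x \<in> S"
    using \<open>convex S\<close> x0 x t by (simp add: convex_alt)
  then have z: "z \<in> S"
    by (simp add: z_def w_def algebra_simps)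
  have "x0 - z = - (t *\<^sub>R w)" "x - z = (1 - t) *\<^sub>R w"
    by (simp_all add: z_def w_def algebra_simps)
  then have dist1: "dist (u x0) (u z) = t * norm w" and dist2: "dist (u z) (u x) = (1 - t) * norm w"
    using isometry[OF x0 z] isometry[OF z x] t by (simp_all add: dist_commute dist_norm)
  have "dist (u x0) (u x) = norm w"
    using isometry[OF x0 x] by (simp add: w_def dist_norm norm_minus_commute)
  \<comment> \<open>Equality in the triangle inequality puts u z on the segment from u x0 to u x.\<close>
  then have "between (u x0, u x) (u z)"
    using dist1 dist2 by (simp add: between algebra_simps)
  then obtain s where s: "0 \<le> s" "s \<le> 1" "u z = (1 - s) *\<^sub>R u x0 + s *\<^sub>R u x"
    by (rule betweenE)
  have "u x0 - u z = s *\<^sub>R (u x0 - u x)"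
    using s(3) by (simp add: algebra_simps)
  then have "dist (u x0) (u z) = s * norm w"
    using s(1) \<open>dist (u x0) (u x) = norm w\<close> by (simp add: dist_norm)
  then have "s = t \<or> w = 0"
    using dist1 by auto
  then show ?thesis
    using s(3) by (auto simp: z_def w_def algebra_simps)
qed

lemma isometry_on_convex_eq_affine:
  fixes u :: "'a::euclidean_space \<Rightarrow> 'b::euclidean_space"
  assumes "convex S" and x0: "x0 \<in> S"
    and isometry: "\<And>x y. x \<in> S \<Longrightarrow> y \<in> S \<Longrightarrow> dist (u x) (u y) = dist x y"
    and D: "(u has_derivative D) (at x0 within S)"
    and x: "x \<in> S"
  shows "u x = u x0 + D (x - x0)"
proof -
  define w where "w = x - x0"
  have segment: "x0 + t *\<^sub>R w \<in> S" if "0 \<le> t" "t \<le> 1" for t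
  proof -
    have "(1 - t) *\<^sub>R x0 + t *\<^sub>R x \<in> S"
      using \<open>convex S\<close> x0 x that by (simp add: convex_alt)
    then show ?thesis
      by (simp add: w_def algebra_simps)
  qed
  have "((\<lambda>t. x0 + t *\<^sub>R w) has_vector_derivative w) (at 0 within {0..1})"
    by (auto intro!: derivative_eq_intros)
  moreover have "(u has_derivative D) (at (x0 + 0 *\<^sub>R w) within (\<lambda>t. x0 + t *\<^sub>R w) ` {0..1})"
    using segment by (simp, intro has_derivative_subset[OF D]) auto
  ultimately have "(u \<circ> (\<lambda>t. x0 + t *\<^sub>R w) has_vector_derivative D w) (at 0 within {0..1})"
    by (rule vector_derivative_diff_chain_within)
  then have "((\<lambda>t. u x0 + t *\<^sub>R (u x - u x0)) has_vector_derivative D w) (at 0 within {0..1})"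
    by (rule has_vector_derivative_transform_within[OF _ zero_less_one])
       (auto simp: w_def isometry_on_convex_segment[OF \<open>convex S\<close> x0 x isometry])
  moreover have "((\<lambda>t. u x0 + t *\<^sub>R (u x - u x0)) has_vector_derivative (u x - u x0)) (at 0 within {0..1})"
    by (auto intro!: derivative_eq_intros)
  ultimately have "D w = u x - u x0"
    using vector_derivative_unique_within_closed_interval[of 0 1 0] by auto
  then show ?thesis
    by (simp add: w_def)
qed

lemma affine_eq_on_ball_imp_eq:
  fixes M M' :: "real^'n::finite^'m::finite"
  assumes "r > 0" and eq: "\<And>x. x \<in> ball c r \<Longrightarrow> M *v x + b = M' *v x + b'"
  shows "M = M'" and "b = b'"
proof -
  have "M *v v = M' *v v" for v
  proof (cases "v = 0")
    case False
    define t where "t = r / (2 * norm v)"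
    have "t > 0" "t * norm v < r"
      using False \<open>r > 0\<close> by (simp_all add: t_def)
    then have "c + t *\<^sub>R v \<in> ball c r"
      by (simp add: dist_norm)
    from eq[OF this] have "(M *v c + b) + t *\<^sub>R (M *v v) = (M' *v c + b') + t *\<^sub>R (M' *v v)"
      by (simp add: matrix_vector_right_distrib matrix_vector_mult_scaleR algebra_simps)
    then have "t *\<^sub>R (M *v v) = t *\<^sub>R (M' *v v)"
      using eq[of c] \<open>r > 0\<close> by simp
    then show ?thesis
      using \<open>t > 0\<close> by simp
  qed simp
  then show "M = M'"
    by (simp add: matrix_eq)
  then show "b = b'"
    using eq[of c] \<open>r > 0\<close> by simp
qed

lemma affine_eq_on_overlapping_balls:
  fixes u :: "real^'n::finite \<Rightarrow> real^'m::finite"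
  assumes c: "\<forall>y\<in>ball c r. u y = M *v y + b" and x: "\<forall>y\<in>ball x r'. u y = M' *v y + b'"
    and "x \<in> ball c r" "r' > 0"
  shows "M' = M" and "b' = b"
proof -
  have pos: "min r' (r - dist c x) > 0"
    using assms(3,4) by simp
  have sub: "ball x (min r' (r - dist c x)) \<subseteq> ball x r' \<inter> ball c r"
    by (auto simp: dist_commute) (metis add.commute dist_commute dist_triangle_lt less_diff_eq)
  have "M' *v y + b' = M *v y + b" if "y \<in> ball x (min r' (r - dist c x))" for y
  proof -
    have "y \<in> ball x r'" "y \<in> ball c r"
      using that sub by auto
    from bspec[OF x this(1)] bspec[OF c this(2)] show ?thesis
      by simp
  qed
  then show "M' = M" "b' = b"
    using affine_eq_on_ball_imp_eq[OF pos] by blast+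
qed

lemma locally_affine_imp_affine:
  fixes u :: "real^'n::finite \<Rightarrow> real^'m::finite"
  assumes "connected U"
    and local: "\<And>c. c \<in> U \<Longrightarrow> \<exists>r>0. \<exists>M b. \<forall>x\<in>ball c r. u x = M *v x + b"
  shows "\<exists>M b. \<forall>x\<in>U. u x = M *v x + b"
proof -
  define affine_near where
    "affine_near c p \<longleftrightarrow> (\<exists>r>0. \<forall>x\<in>ball c r. u x = fst p *v x + snd p)" for c p
  define f where "f c = (SOME p. affine_near c p)" for c
  have f: "affine_near c (f c)" if "c \<in> U" for c
    unfolding f_def by (rule someI_ex) (use local[OF that] in \<open>auto simp: affine_near_def\<close>)
  have "f constant_on U"
  proof (rule locally_constant_imp_constant[OF \<open>connected U\<close>])
    fix c assume "c \<in> U"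
    then obtain r where "r > 0" and r: "\<forall>x\<in>ball c r. u x = fst (f c) *v x + snd (f c)"
      using f unfolding affine_near_def by blast
    have "f x = f c" if "x \<in> U \<inter> ball c r" for x
    proof -
      have "x \<in> U" "x \<in> ball c r"
        using that by blast+
      then obtain r' where "r' > 0" and r': "\<forall>y\<in>ball x r'. u y = fst (f x) *v y + snd (f x)"
        using f unfolding affine_near_def by blast
      show ?thesis
        using affine_eq_on_overlapping_balls[OF r r' \<open>x \<in> ball c r\<close> \<open>r' > 0\<close>]
        by (simp add: prod_eq_iff)
    qed
    moreover have "openin (top_of_set U) (U \<inter> ball c r)" "c \<in> U \<inter> ball c r"
      using \<open>c \<in> U\<close> \<open>r > 0\<close> by (simp_all add: openin_open_Int)
    ultimately show "\<exists>T. openin (top_of_set U) T \<and> c \<in> T \<and> (\<forall>x\<in>T. f x = f c)"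
      by blast
  qed
  then obtain p where "\<And>c. c \<in> U \<Longrightarrow> f c = p"
    by (auto simp: constant_on_def)
  moreover have "u c = fst (f c) *v c + snd (f c)" if "c \<in> U" for c
    using f[OF that] centre_in_ball unfolding affine_near_def by blast
  ultimately have "u c = fst p *v c + snd p" if "c \<in> U" for c
    using that by simp
  then show ?thesis
    by blast
qed

section \<open>Rigidity\<close>

lemma open_meets_subset_of_full_measure:
  assumes "A \<subseteq> B" "A \<in> lmeasurable" "B \<in> lmeasurable"
    and "measure lebesgue A = measure lebesgue B"
    and "open V" "V \<noteq> {}" "V \<subseteq> B"
  shows "V \<inter> A \<noteq> {}"
proof
  assume "V \<inter> A = {}"
  then have "A \<subseteq> B - V"
    using assms(1) by blast
  have V: "V \<in> lmeasurable"
    using assms(5) by (intro fmeasurableI2[OF assms(3,7)]) (simp add: borel_open)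
  have "measure lebesgue A \<le> measure lebesgue (B - V)"
    by (rule measure_mono_fmeasurable[OF \<open>A \<subseteq> B - V\<close>])
       (use assms(2,3) V in \<open>auto intro: fmeasurableD\<close>)
  also have "\<dots> = measure lebesgue B - measure lebesgue V"
    by (rule measurable_measure_Diff[OF assms(3) fmeasurableD[OF V] assms(7)])
  finally have "measure lebesgue V \<le> 0"
    using assms(4) by simp
  then have "negligible V"
    using negligible_iff_measure0[OF V] measure_nonneg[of lebesgue V] by simp
  then show False
    using open_not_negligible[OF assms(5,6)] by blast
qed

locale orthogonal_gradient_map =
  fixes U :: "(real^'n::finite) set" and u :: "real^'n \<Rightarrow> real^'n" and N :: "(real^'n) set"
  assumes open_U: "open U" and bounded_U: "bounded U"
    and lipschitz: "locally_lipschitz_on U u"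
    and open_map: "\<And>V. open V \<Longrightarrow> V \<subseteq> U \<Longrightarrow> open (u ` V)"
    and measure_eq: "measure lebesgue (u ` U) = measure lebesgue U"
    and negligible_N: "negligible N"
    and orthogonal_derivative:
      "\<And>x. x \<in> U - N \<Longrightarrow> \<exists>D. (u has_derivative D) (at x) \<and> orthogonal_transformation D"
begin

lemma measure_image_le:
  assumes "S \<subseteq> U" "S \<in> sets lebesgue"
  shows "u ` S \<in> lmeasurable" and "measure lebesgue (u ` S) \<le> measure lebesgue S"
proof -
  define D where "D x = (SOME D. (u has_derivative D) (at x) \<and> orthogonal_transformation D)" for x
  have D: "(u has_derivative D x) (at x)" "orthogonal_transformation (D x)" if "x \<in> S - N" for x
    using someI_ex[OF orthogonal_derivative] that assms(1) unfolding D_def by blast+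
  have "\<bar>det (matrix (D x))\<bar> \<le> 1" if "x \<in> S - N" for x
    using D(2)[OF that] by (simp add: orthogonal_transformation_matrix det_orthogonal_matrix)
  moreover have "S \<in> lmeasurable"
    using assms bounded_U bounded_subset bounded_set_imp_lmeasurable by blast
  ultimately show "u ` S \<in> lmeasurable" "measure lebesgue (u ` S) \<le> measure lebesgue S"
    using measure_image_det_bound[OF _ negligible_N locally_lipschitz_on_subset[OF lipschitz assms(1)] D(1),
        of 1] by auto
qed

lemma inj_on_U: "inj_on u U"
proof (rule inj_onI, rule ccontr)
  fix x1 x2 assume x: "x1 \<in> U" "x2 \<in> U" "u x1 = u x2" "x1 \<noteq> x2"
  obtain O1 O2 where "open O1" "open O2" "x1 \<in> O1" "x2 \<in> O2" "O1 \<inter> O2 = {}"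
    using hausdorff[OF x(4)] by blast
  define B1 where "B1 = U \<inter> O1"
  define B2 where "B2 = U \<inter> O2"
  have B: "open B1" "B1 \<subseteq> U" "open B2" "B2 \<subseteq> U - B1"
    using open_U \<open>open O1\<close> \<open>open O2\<close> \<open>O1 \<inter> O2 = {}\<close> by (auto simp: B1_def B2_def)
  define V where "V = u ` B1 \<inter> u ` B2"
  have "open V"
    unfolding V_def using open_map B by blast
  have "V \<noteq> {}"
    using x \<open>x1 \<in> O1\<close> \<open>x2 \<in> O2\<close> unfolding V_def B1_def B2_def by (metis IntI imageI empty_iff)
  have B1_image: "u ` B1 \<in> lmeasurable" "measure lebesgue (u ` B1) \<le> measure lebesgue B1"
    using measure_image_le[OF B(2)] B(1) by (simp_all add: borel_open)
  have rest_image: "u ` (U - B1) \<in> lmeasurable"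
    "measure lebesgue (u ` (U - B1)) \<le> measure lebesgue (U - B1)"
    using measure_image_le[of "U - B1"] open_U B(1) by (simp_all add: borel_open)
  have V_sub: "V \<subseteq> u ` B1"
    by (simp add: V_def)
  have V_meas: "V \<in> lmeasurable"
    using \<open>open V\<close> by (intro fmeasurableI2[OF B1_image(1) V_sub]) (simp add: borel_open)
  have "measure lebesgue V > 0"
    using open_not_negligible[OF \<open>open V\<close> \<open>V \<noteq> {}\<close>] negligible_iff_measure0[OF V_meas]
      measure_nonneg[of lebesgue V] by linarith
  \<comment> \<open>Points of V have preimages in both B1 and B2, so V is counted twice below.\<close>
  have "u ` U \<subseteq> u ` (U - B1) \<union> (u ` B1 - V)"
    using B(4) by (auto simp: V_def)
  then have "measure lebesgue (u ` U) \<le> measure lebesgue (u ` (U - B1) \<union> (u ` B1 - V))"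
    using rest_image(1) B1_image(1) V_meas measure_image_le(1)[OF order_refl] open_U
    by (intro measure_mono_fmeasurable) (auto simp: borel_open)
  also have "\<dots> \<le> measure lebesgue (u ` (U - B1)) + measure lebesgue (u ` B1 - V)"
    using rest_image(1) B1_image(1) V_meas by (intro measure_Un_le) auto
  also have "measure lebesgue (u ` B1 - V) = measure lebesgue (u ` B1) - measure lebesgue V"
    by (rule measurable_measure_Diff[OF B1_image(1) fmeasurableD[OF V_meas] V_sub])
  finally have "measure lebesgue (u ` U) \<le>
      measure lebesgue (u ` (U - B1)) + measure lebesgue (u ` B1) - measure lebesgue V"
    by simp
  moreover have "measure lebesgue (U - B1) = measure lebesgue U - measure lebesgue B1"
    using B open_U bounded_U by (intro measurable_measure_Diff) (auto simp: lmeasurable_open borel_open)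
  ultimately show False
    using rest_image(2) B1_image(2) \<open>measure lebesgue V > 0\<close> measure_eq by linarith
qed

lemma measure_image_eq:
  assumes "S \<subseteq> U" "S \<in> sets lebesgue"
  shows "measure lebesgue (u ` S) = measure lebesgue S"
proof -
  have U: "U \<in> lmeasurable"
    using open_U bounded_U by (simp add: lmeasurable_open)
  have rest: "U - S \<subseteq> U" "U - S \<in> sets lebesgue"
    using assms(2) open_U by (auto simp: borel_open)
  have "u ` U = u ` S \<union> u ` (U - S)" "u ` S \<inter> u ` (U - S) = {}"
    using assms(1) inj_on_U by (auto simp: inj_on_def)
  then have "measure lebesgue U = measure lebesgue (u ` S) + measure lebesgue (u ` (U - S))"
    using measure_image_le(1)[OF assms] measure_image_le(1)[OF rest] measure_eq
    by (simp add: measure_Un3)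
  moreover have "measure lebesgue (U - S) = measure lebesgue U - measure lebesgue S"
    by (rule measurable_measure_Diff[OF U assms(2,1)])
  ultimately show ?thesis
    using measure_image_le(2)[OF assms] measure_image_le(2)[OF rest] by linarith
qed

lemma ae_contracting_on_U: "ae_contracting_on U u"
  unfolding ae_contracting_on_def
proof (intro conjI exI[of _ N] ballI)
  fix x assume "x \<in> U - N"
  then show "\<exists>D. (u has_derivative D) (at x) \<and> (\<forall>v. norm (D v) \<le> norm v)"
    using orthogonal_derivative orthogonal_transformation_norm by fastforce
qed (use lipschitz negligible_N in auto)

lemma lipschitz_on_convex:
  assumes "open W" "convex W" "W \<subseteq> U"
  shows "1-lipschitz_on W u"
  using assms(1,2) ae_contracting_on_subset[OF ae_contracting_on_U assms(3)]
  by (rule lipschitz_one_if_ae_contracting)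

lemma image_ball_dense:
  assumes "ball z t \<subseteq> U" "open V" "V \<noteq> {}" "V \<subseteq> ball (u z) t"
  shows "V \<inter> u ` ball z t \<noteq> {}"
proof (rule open_meets_subset_of_full_measure[OF _ _ _ _ assms(2-4)])
  have "t > 0"
    using assms(3,4) by (auto simp: ball_empty)
  show "u ` ball z t \<subseteq> ball (u z) t"
  proof
    fix v assume "v \<in> u ` ball z t"
    then obtain w where "w \<in> ball z t" "v = u w"
      by blast
    moreover have "dist (u z) (u w) \<le> 1 * dist z w"
      using lipschitz_onD[OF lipschitz_on_convex[OF open_ball convex_ball assms(1)]]
        \<open>w \<in> ball z t\<close> \<open>t > 0\<close> by simp
    ultimately show "v \<in> ball (u z) t"
      by simp
  qed
  show "u ` ball z t \<in> lmeasurable"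
    using measure_image_le(1)[OF assms(1)] by (simp add: borel_open)
  show "ball (u z) t \<in> lmeasurable"
    by simp
  have "measure lebesgue (u ` ball z t) = measure lebesgue (ball z t)"
    using measure_image_eq[OF assms(1)] by (simp add: borel_open)
  also have "\<dots> = measure lebesgue (ball (u z) t)"
    using content_ball_conv_unit_ball[of t z] content_ball_conv_unit_ball[of t "u z"] \<open>t > 0\<close>
    by (simp add: measure_completion del: content_ball_conv_unit_ball)
  finally show "measure lebesgue (u ` ball z t) = measure lebesgue (ball (u z) t)" .
qed

lemma dist_le_dist_image:
  assumes "ball x (dist x y / 2) \<subseteq> U" "ball y (dist x y / 2) \<subseteq> U"
  shows "dist x y \<le> dist (u x) (u y)"
proof (rule ccontr)
  define t where "t = dist x y / 2"
  assume "\<not> dist x y \<le> dist (u x) (u y)"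
  then have shorter: "dist (u x) (u y) < dist x y"
    by simp
  have "ball x t \<inter> ball y t = {}"
  proof (rule ccontr)
    assume "ball x t \<inter> ball y t \<noteq> {}"
    then obtain w where "dist x w < t" "dist y w < t"
      by auto
    then show False
      using dist_triangle[of x y w] by (simp add: t_def dist_commute)
  qed
  \<comment> \<open>The images of the two disjoint balls are dense in balls of radius t around u x and u y,
    and these overlap because u x and u y are closer than 2 t; injectivity is violated.\<close>
  define W where "W = ball (u x) t \<inter> ball (u y) t"
  have "midpoint (u x) (u y) \<in> W"
    using shorter by (simp add: W_def t_def dist_midpoint)
  then have "W \<inter> u ` ball x t \<noteq> {}"
    by (intro image_ball_dense[OF assms(1)[folded t_def]]) (auto simp: W_def)
  moreover have "open (W \<inter> u ` ball x t)"
    using open_map[OF open_ball assms(1)[folded t_def]] by (simp add: W_def open_Int)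
  ultimately have "(W \<inter> u ` ball x t) \<inter> u ` ball y t \<noteq> {}"
    by (intro image_ball_dense[OF assms(2)[folded t_def]]) (auto simp: W_def)
  then obtain a b where "a \<in> ball x t" "b \<in> ball y t" "u a = u b"
    by blast
  moreover have "a \<in> U" "b \<in> U"
    using calculation(1,2) assms by (auto simp: t_def)
  ultimately have "a = b"
    using inj_onD[OF inj_on_U] by blast
  then show False
    using \<open>ball x t \<inter> ball y t = {}\<close> \<open>a \<in> ball x t\<close> \<open>b \<in> ball y t\<close> by blast
qed

lemma isometric_on_half_ball:
  assumes "ball c R \<subseteq> U" "x \<in> ball c (R / 2)" "y \<in> ball c (R / 2)"
  shows "dist (u x) (u y) = dist x y"
proof -
  have "dist c x < R / 2" "dist c y < R / 2"
    using assms(2,3) by simp_all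
  moreover have "dist x y \<le> dist c x + dist c y"
    using dist_triangle[of x y c] by (simp add: dist_commute)
  ultimately have "dist c x < R" "dist c y < R" "dist x y < R"
    using zero_le_dist[of c x] zero_le_dist[of c y] by linarith+
  then have "dist (u x) (u y) \<le> 1 * dist x y"
    by (intro lipschitz_onD[OF lipschitz_on_convex[OF open_ball convex_ball assms(1)]]) simp_all
  moreover have "ball p (dist x y / 2) \<subseteq> U" if "dist c p < R / 2" for p
  proof -
    have "dist c w < R" if "dist p w < dist x y / 2" for w
      using dist_triangle[of c w p] \<open>dist c p < R / 2\<close> that \<open>dist x y < R\<close> by simp
    then show ?thesis
      using assms(1) by auto
  qed
  ultimately show ?thesis
    using dist_le_dist_image \<open>dist c x < R / 2\<close> \<open>dist c y < R / 2\<close> by force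
qed

lemma locally_affine:
  assumes "c \<in> U"
  shows "\<exists>r>0. \<exists>M b. \<forall>x\<in>ball c r. u x = M *v x + b"
proof -
  obtain R where "R > 0" and R: "ball c R \<subseteq> U"
    using open_U assms open_contains_ball by blast
  have "\<not> ball c (R / 2) \<subseteq> N"
    using open_not_negligible[of "ball c (R / 2)"] negligible_subset[OF negligible_N] \<open>R > 0\<close> by auto
  then obtain x0 where x0: "x0 \<in> ball c (R / 2)" "x0 \<notin> N"
    by blast
  then have "x0 \<in> U - N"
    using R \<open>R > 0\<close> by auto
  then obtain D where D: "(u has_derivative D) (at x0)" "orthogonal_transformation D"
    using orthogonal_derivative by blast
  have "u x = u x0 + D (x - x0)" if "x \<in> ball c (R / 2)" for x
    by (rule isometry_on_convex_eq_affine[OF convex_ball x0(1) isometric_on_half_ball[OF R]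
          has_derivative_at_withinI[OF D(1)] that])
  then have "\<forall>x\<in>ball c (R / 2). u x = matrix D *v x + (u x0 - matrix D *v x0)"
    using orthogonal_transformation_linear[OF D(2)] by (simp add: matrix_works linear_diff)
  then show ?thesis
    using \<open>R > 0\<close> by (intro exI[of _ "R / 2"]) auto
qed

end

lemma AE_orthogonal_derivativeE:
  fixes u :: "real^'n::finite \<Rightarrow> real^'n"
  assumes "AE x in lebesgue. x \<in> U \<longrightarrow>
      (\<exists>D. (u has_derivative D) (at x) \<and> orthogonal_matrix (matrix D))"
  obtains N where "negligible N"
    and "\<And>x. x \<in> U - N \<Longrightarrow> \<exists>D. (u has_derivative D) (at x) \<and> orthogonal_transformation D"
proof -
  obtain N where N: "{x \<in> space lebesgue. \<not> (x \<in> U \<longrightarrow>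
      (\<exists>D. (u has_derivative D) (at x) \<and> orthogonal_matrix (matrix D)))} \<subseteq> N"
    "emeasure lebesgue N = 0" "N \<in> sets lebesgue"
    using AE_E[OF assms] by blast
  have "\<exists>D. (u has_derivative D) (at x) \<and> orthogonal_transformation D" if "x \<in> U - N" for x
  proof -
    have "\<exists>D. (u has_derivative D) (at x) \<and> orthogonal_matrix (matrix D)"
      using subsetD[OF N(1), of x] that by auto
    then obtain D where "(u has_derivative D) (at x)" "orthogonal_matrix (matrix D)"
      by blast
    then show ?thesis
      using has_derivative_linear orthogonal_transformation_matrix by blast
  qed
  moreover have "negligible N"
    using N(2,3) by (simp add: negligible_iff_null_sets null_sets_def)
  ultimately show ?thesis
    using that by blast
qed

lemma affine_on_closure:
  fixes u :: "real^'n::finite \<Rightarrow> real^'m::finite" and M :: "real^'n^'m"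
  assumes "continuous_on (closure U) u" "\<forall>x\<in>U. u x = M *v x + b"
  shows "\<forall>x\<in>closure U. u x = M *v x + b"
proof
  fix x assume "x \<in> closure U"
  have "u x - (M *v x + b) = 0"
  proof (rule continuous_constant_on_closure[OF _ _ \<open>x \<in> closure U\<close>])
    show "continuous_on (closure U) (\<lambda>x. u x - (M *v x + b))"
      by (intro continuous_intros assms(1))
  qed (simp add: assms(2))
  then show "u x = M *v x + b"
    by simp
qed

theorem theorem3p8:
  fixes U :: "(real^'n) set" and u :: "real^'n \<Rightarrow> real^'n"
  assumes "open U" and "connected U" and "bounded U"
    and "continuous_on (closure U) u"
    and "locally_lipschitz_on (closure U) u"
    and "\<forall>V. open V \<and> V \<subseteq> U \<longrightarrow> open (u ` V)"
    and "emeasure lebesgue U = emeasure lebesgue (u ` U)"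
    and "u ` frontier U \<subseteq> frontier (u ` U)"
    and "AE x in lebesgue. x \<in> U \<longrightarrow>
           (\<exists>D. (u has_derivative D) (at x) \<and> orthogonal_matrix (matrix D))"
  shows "\<exists>(M::real^'n^'n) b. \<forall>x\<in>closure U. u x = M *v x + b"
proof -
  obtain N where N: "negligible N"
    and orthogonal: "\<And>x. x \<in> U - N \<Longrightarrow> \<exists>D. (u has_derivative D) (at x) \<and> orthogonal_transformation D"
    using AE_orthogonal_derivativeE[OF assms(9)] by blast
  interpret orthogonal_gradient_map U u N
  proof
    show "locally_lipschitz_on U u"
      using assms(5) closure_subset by (rule locally_lipschitz_on_subset)
    show "measure lebesgue (u ` U) = measure lebesgue U"
      using assms(7) by (simp add: measure_def)
    show "open (u ` V)" if "open V" "V \<subseteq> U" for V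
      using assms(6) that by blast
  qed (use assms(1,3) N orthogonal in simp_all)
  obtain M b where "\<forall>x\<in>U. u x = M *v x + b"
    using locally_affine_imp_affine[OF assms(2) locally_affine] by blast
  then show ?thesis
    using affine_on_closure[OF assms(4)] by blast
qed

end
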